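(* For $x=re^{i\theta}\in C$, the squared norms of the Euclidean and spherical shape operators of $M_x$ at $x$ are $$\|A^E(x)\|^2=\frac{ng}{r^2}\csc^2 g\theta\,(1+\delta\cos g\theta),\qquad \|A^S(x)\|^2=\frac{ng}{r^2}\csc^2 g\theta\,(1+\delta\cos g\theta)-\frac{n}{r^2}.$$
   Context: Let $M^n$ be a compact isoparametric hypersurface in the unit sphere $S^{n+1}\subset\mathbb{R}^{n+2}$ (constant principal curvatures) with $g$ distinct principal curvatures; then $g\in\{1,2,3,4,6\}$. Fix $x_0\in M$ and identify the 2-dimensional normal space $\nu_{x_0}M$ of $M$ in $\mathbb{R}^{n+2}$ with $\mathbb{C}$ so that the two focal submanifolds $M_+$, $M_-$ ($\dim M_+\le\dim M_-$) meet the normal circle at $1$ and $e^{i\pi/g}$ (the intersection points closest to $x_0$). The Weyl chamber is $C=\{re^{i\theta}:r>0,\ 0<\theta<\pi/g\}$. For $k=1,\dots,g$ let $\theta_k=k\pi/g-\pi/2$, $\alpha_k=e^{i\theta_k}$, and $m_k=m_1$ for $k$ odd, $m_k=m_2$ for $k$ even, where $(m_1,m_2)$, $m_1\le m_2$, is the multiplicity data of the principal curvatures; $m_1=m_2$ if $g$ is odd, and $(m_1+m_2)g=2n$. For $x\in C$, $M_x=\{p+\tilde\xi(p):p\in M\}$ where $\tilde\xi$ is the parallel normal field on $M$ with $\tilde\xi(x_0)=x-x_0$; it is an $n$-dimensional isoparametric submanifold of $\mathbb{R}^{n+2}$ lying in $S^{n+1}(|x|)$, with normal space $\nu_{x_0}M$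 at $x$, and $T_xM_x=\oplus_kE_k$, $\dim E_k=m_k$, with Euclidean shape operator $A_\xi|_{E_k}=\langle\xi,-\alpha_k/\langle x,\alpha_k\rangle\rangle\mathrm{Id}$ ($\langle\cdot,\cdot\rangle$ the real inner product on $\mathbb{C}=\mathbb{R}^2$). $H^E(x),A^E(x)$ denote mean curvature vector and shape operator of $M_x$ at $x$ in $\mathbb{R}^{n+2}$; $H^S(x),A^S(x)$ those of $M_x$ as a hypersurface of $S^{n+1}(|x|)$; $\|A\|^2$ is the sum of squared Hilbert–Schmidt norms over an orthonormal normal basis. Set $\delta=(m_2-m_1)/(m_2+m_1)$ if $g\ge2$ and $\delta=0$ if $g=1$, and let $\theta_{\min}\in(0,\pi/g)$ be defined by $\cos g\theta_{\min}=-\delta$. *)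

theory Defs
  imports "HOL-Analysis.Analysis"
begin

text \<open>The normal space of M at x0 is identified with the complex plane (real inner
  product = the inner product on complex from HOL-Analysis).\<close>

definition iso_alpha :: "nat \<Rightarrow> nat \<Rightarrow> complex" where
  "iso_alpha g k = cis (real k * pi / real g - pi / 2)"

definition iso_mult :: "nat \<Rightarrow> nat \<Rightarrow> nat \<Rightarrow> nat" where
  "iso_mult m1 m2 k = (if odd k then m1 else m2)"

definition iso_delta :: "nat \<Rightarrow> nat \<Rightarrow> nat \<Rightarrow> real" where
  "iso_delta g m1 m2 = (if g \<ge> 2 then (real m2 - real m1) / (real m2 + real m1) else 0)"

text \<open>Eigenvalue of the Euclidean shape operator A_xi of M_x at x on E_k:
  A_xi restricted to E_k equals  < xi, - alpha_k / <x, alpha_k> >  Id.\<close>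
definition iso_shape_ev :: "nat \<Rightarrow> complex \<Rightarrow> nat \<Rightarrow> complex \<Rightarrow> real" where
  "iso_shape_ev g x k xi = xi \<bullet> (- iso_alpha g k / complex_of_real (x \<bullet> iso_alpha g k))"

text \<open>Squared Hilbert-Schmidt norm of A_xi on T_x M_x = direct sum of E_k, dim E_k = m_k,
  A_xi acting as a scalar on each E_k.\<close>
definition iso_HS_sq :: "nat \<Rightarrow> nat \<Rightarrow> nat \<Rightarrow> complex \<Rightarrow> complex \<Rightarrow> real" where
  "iso_HS_sq g m1 m2 x xi = (\<Sum>k=1..g. real (iso_mult m1 m2 k) * (iso_shape_ev g x k xi)\<^sup>2)"

text \<open>||A^E(x)||^2 computed with the orthonormal basis e1, e2 of the normal space nu_x M_x = C.\<close>
definition iso_normE_sq :: "nat \<Rightarrow> nat \<Rightarrow> nat \<Rightarrow> complex \<Rightarrow> complex \<Rightarrow> complex \<Rightarrow> real" where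
  "iso_normE_sq g m1 m2 x e1 e2 = iso_HS_sq g m1 m2 x e1 + iso_HS_sq g m1 m2 x e2"

text \<open>||A^S(x)||^2: M_x is a hypersurface of S^{n+1}(|x|); its unit normal there is a unit
  vector nu of nu_x M_x orthogonal to x, and the spherical shape operator A^S_nu coincides
  with the Euclidean A_nu (nu is tangent to the sphere).\<close>
definition iso_normS_sq :: "nat \<Rightarrow> nat \<Rightarrow> nat \<Rightarrow> complex \<Rightarrow> complex \<Rightarrow> real" where
  "iso_normS_sq g m1 m2 x nu = iso_HS_sq g m1 m2 x nu"

end

theory Submission
  imports Defs
begin

text \<open>Since the normal space is two-dimensional, Parseval's identity in an orthonormal frame gives
  \<open>\<parallel>A\<^sup>E\<parallel>\<^sup>2 = \<Sum> m\<^sub>k / \<langle>x, \<alpha>\<^sub>k\<rangle>\<^sup>2\<close>, and because the spherical unit normal \<open>\<nu>\<close> completes \<open>x / \<bar>x\<bar>\<close> to an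
  orthonormal frame, \<open>\<parallel>A\<^sup>S\<parallel>\<^sup>2 = \<parallel>A\<^sup>E\<parallel>\<^sup>2 - (\<Sum> m\<^sub>k) / \<bar>x\<bar>\<^sup>2\<close>. With \<open>\<langle>x, \<alpha>\<^sub>k\<rangle> = r sin (k\<pi>/g - \<theta>)\<close>
  everything reduces to the cosecant sum \<open>\<Sum>\<^sub>j\<^sub>=\<^sub>1\<^sup>h csc\<^sup>2 (j\<pi>/h - t) = h\<^sup>2 csc\<^sup>2 (h t)\<close> for \<open>h \<le> 3\<close>.
  For odd \<open>g\<close> the multiplicities agree and this is the whole sum; for \<open>g = 2h\<close> the odd- and
  even-indexed terms are two such sums, the first shifted by \<open>\<pi>/(2h)\<close>, which yields
  \<open>h\<^sup>2 (m\<^sub>1 sec\<^sup>2 (h\<theta>) + m\<^sub>2 csc\<^sup>2 (h\<theta>))\<close>, i.e.\ the claimed \<open>\<delta>\<close>-formula.\<close>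

lemma inv_sin_sq_add_inv_cos_sq:
  fixes a :: real
  assumes "sin (2*a) \<noteq> 0"
  shows "1/(sin a)\<^sup>2 + 1/(cos a)\<^sup>2 = 4/(sin (2*a))\<^sup>2"
proof -
  have "sin a \<noteq> 0" "cos a \<noteq> 0" using assms by (auto simp: sin_double)
  then show ?thesis unfolding sin_double by (simp add: field_simps power_mult_distrib)
qed

lemma sin_treble: "sin (3*(t::real)) = sin t * (3*(cos t)\<^sup>2 - (sin t)\<^sup>2)"
proof -
  have "sin (3*t) = sin (2*t + t)" by simp
  then show ?thesis unfolding sin_add sin_double cos_double by (simp add: power2_eq_square algebra_simps)
qed

lemma inv_sin_sq_sum_thirds:
  fixes t :: real
  assumes "sin (3*t) \<noteq> 0"
  shows "1/(sin (pi/3 - t))\<^sup>2 + 1/(sin (2*pi/3 - t))\<^sup>2 + 1/(sin (pi - t))\<^sup>2 = 9/(sin (3*t))\<^sup>2"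
proof -
  define s c u v where "s = sin t" and "c = cos t"
    and "u = sqrt 3 * c - s" and "v = sqrt 3 * c + s"
  have sin_minus: "sin (pi/3 - t) = u/2"
    unfolding u_def s_def c_def sin_diff by (simp add: sin_60 cos_60)
  have "sin (2*pi/3 - t) = sin (pi - (pi/3 + t))" by simp
  also have "\<dots> = v/2"
    unfolding sin_pi_minus v_def s_def c_def sin_add by (simp add: sin_60 cos_60)
  finally have sin_plus: "sin (2*pi/3 - t) = v/2" .
  have uv: "u * v = 3*c^2 - s^2" unfolding u_def v_def by (simp add: algebra_simps power2_eq_square)
  have treble: "sin (3*t) = s * (u * v)"
    unfolding uv sin_treble s_def c_def ..
  have "s \<noteq> 0" "u \<noteq> 0" "v \<noteq> 0" using assms treble by auto
  moreover have "4 * s^2 * (u^2 + v^2) + (u * v)^2 = 9"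
  proof -
    have "u^2 + v^2 = 2 * (3*c^2 + s^2)" unfolding u_def v_def by (simp add: algebra_simps power2_eq_square)
    moreover have "s^2 + c^2 = 1" unfolding s_def c_def by simp
    ultimately show ?thesis unfolding uv by algebra
  qed
  ultimately show ?thesis
    unfolding sin_minus sin_plus treble sin_pi_minus s_def[symmetric]
    by (simp add: field_simps power_mult_distrib)
qed

lemma inv_sin_sq_sum_equispaced:
  fixes t :: real
  assumes "h \<in> {1, 2, 3}" and "sin (real h * t) \<noteq> 0"
  shows "(\<Sum>j=1..h. 1/(sin (real j * pi / real h - t))\<^sup>2) = (real h)\<^sup>2 / (sin (real h * t))\<^sup>2"
proof -
  from assms(1) consider "h = 1" | "h = 2" | "h = 3" by auto
  then show ?thesis
  proof cases
    case 1
    then show ?thesis by simp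
  next
    case 2
    then have "sin (2*t) \<noteq> 0" using assms(2) by simp
    from inv_sin_sq_add_inv_cos_sq[OF this] show ?thesis
      using 2 by (simp add: eval_nat_numeral sin_diff)
  next
    case 3
    then have "sin (3*t) \<noteq> 0" using assms(2) by simp
    from inv_sin_sq_sum_thirds[OF this] show ?thesis
      using 3 by (simp add: eval_nat_numeral)
  qed
qed

lemma inv_sin_sq_sum_odd_multiples:
  fixes t :: real
  assumes "h \<in> {1, 2, 3}" and "cos (real h * t) \<noteq> 0"
  shows "(\<Sum>j=1..h. 1/(sin (real (2*j - 1) * pi / (2 * real h) - t))\<^sup>2) = (real h)\<^sup>2 / (cos (real h * t))\<^sup>2"
proof -
  have "(\<Sum>j=1..h. 1/(sin (real (2*j - 1) * pi / (2 * real h) - t))\<^sup>2)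
      = (\<Sum>j=1..h. 1/(sin (real j * pi / real h - (t + pi / (2 * real h))))\<^sup>2)"
    using assms(1) by (intro sum.cong) (auto simp: of_nat_diff field_simps)
  also have "\<dots> = (real h)\<^sup>2 / (cos (real h * t))\<^sup>2"
  proof -
    have "real h * (t + pi / (2 * real h)) = real h * t + pi/2" using assms(1) by (auto simp: field_simps)
    then show ?thesis using inv_sin_sq_sum_equispaced[OF assms(1), of "t + pi / (2 * real h)"] assms(2)
      by (simp add: sin_add)
  qed
  finally show ?thesis .
qed

lemma weighted_inv_cos_sq_add_inv_sin_sq:
  fixes P a b :: real
  assumes "sin (2*P) \<noteq> 0" and "a + b \<noteq> 0"
  shows "a/(cos P)\<^sup>2 + b/(sin P)\<^sup>2 = 2*(a + b)/(sin (2*P))\<^sup>2 * (1 + (b - a)/(b + a) * cos (2*P))"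
proof -
  define S C where "S = (sin P)\<^sup>2" and "C = (cos P)\<^sup>2"
  have "S \<noteq> 0" "C \<noteq> 0" using assms(1) unfolding S_def C_def by (auto simp: sin_double)
  have "S + C = 1" unfolding S_def C_def by simp
  have "(a + b) * (1 + (b - a)/(b + a) * (C - S)) = (a + b) + (b - a) * (C - S)"
    using assms(2) by (simp add: field_simps)
  also have "\<dots> = 2*(a*S + b*C)" using \<open>S + C = 1\<close> by algebra
  finally have numerator: "(a + b) * (1 + (b - a)/(b + a) * (C - S)) = 2*(a*S + b*C)" .
  have sin2: "(sin (2*P))\<^sup>2 = 4*S*C" and cos2: "cos (2*P) = C - S"
    unfolding S_def C_def sin_double cos_double by (simp_all add: power_mult_distrib)
  have "2*(a + b)/(sin (2*P))\<^sup>2 * (1 + (b - a)/(b + a) * cos (2*P))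
      = 2/(4*S*C) * ((a + b) * (1 + (b - a)/(b + a) * (C - S)))"
    unfolding sin2 cos2 by (simp add: divide_simps)
  also have "\<dots> = a/C + b/S"
    unfolding numerator using \<open>S \<noteq> 0\<close> \<open>C \<noteq> 0\<close> by (simp add: field_simps)
  finally show ?thesis unfolding S_def C_def ..
qed

lemma sum_atLeast1_split_odd_even:
  "(\<Sum>k=1..2*h. f k) = (\<Sum>j=1..(h::nat). f (2*j - 1)) + (\<Sum>j=1..h. (f (2*j) :: 'a::comm_monoid_add))"
proof (induction h)
  case (Suc h)
  have "{1..2 * Suc h} = insert (2*h+2) (insert (2*h+1) {1..2*h})" by auto
  then show ?case using Suc by (simp add: ac_simps)
qed simp

lemma sum_iso_mult:
  assumes "odd g \<longrightarrow> m1 = m2"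
  shows "(\<Sum>k=1..g. real (iso_mult m1 m2 k)) = (real m1 + real m2) * real g / 2"
proof (cases "even g")
  case True
  then obtain h where g: "g = 2*h" by blast
  have "(\<Sum>j=1..h. real (iso_mult m1 m2 (2*j - 1))) = real h * real m1"
    by (simp add: sum.cong[of _ _ _ "\<lambda>_. real m1"] iso_mult_def)
  then show ?thesis unfolding g sum_atLeast1_split_odd_even by (simp add: iso_mult_def algebra_simps)
next
  case False
  then show ?thesis using assms by (simp add: iso_mult_def)
qed

lemma iso_weighted_inv_sin_sq_sum_even:
  fixes t :: real
  assumes g: "g = 2*h" and h: "h \<in> {1, 2, 3}" and "1 \<le> m1" and "0 < t" and "t < pi / real g"
  shows "(\<Sum>k=1..g. real (iso_mult m1 m2 k) / (sin (real k * pi / real g - t))\<^sup>2)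
    = (real m1 + real m2) * real g / 2 * real g / (sin (real g * t))\<^sup>2
        * (1 + iso_delta g m1 m2 * cos (real g * t))"
proof -
  define f where "f k = real (iso_mult m1 m2 k) / (sin (real k * pi / real g - t))\<^sup>2" for k
  define P where "P = real h * t"
  have "0 < P" "P < pi/2" using assms(4,5) h unfolding g P_def by (auto simp: field_simps)
  then have "sin P > 0" "cos P > 0" "sin (2*P) > 0"
    by (auto intro: sin_gt_zero cos_gt_zero_pi)
  have "(\<Sum>j=1..h. f (2*j - 1))
      = real m1 * (\<Sum>j=1..h. 1/(sin (real (2*j - 1) * pi / (2 * real h) - t))\<^sup>2)"
    unfolding sum_distrib_left f_def g by (intro sum.cong) (auto simp: iso_mult_def)
  also have "\<dots> = real m1 * (real h)\<^sup>2 / (cos P)\<^sup>2"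
    using inv_sin_sq_sum_odd_multiples[OF h, of t] \<open>cos P > 0\<close> unfolding P_def by simp
  finally have odd_terms: "(\<Sum>j=1..h. f (2*j - 1)) = real m1 * (real h)\<^sup>2 / (cos P)\<^sup>2" .
  have "(\<Sum>j=1..h. f (2*j)) = real m2 * (\<Sum>j=1..h. 1 / (sin (real j * pi / real h - t))\<^sup>2)"
    unfolding sum_distrib_left f_def g by (simp add: iso_mult_def)
  also have "\<dots> = real m2 * (real h)\<^sup>2 / (sin P)\<^sup>2"
    using inv_sin_sq_sum_equispaced[OF h, of t] \<open>sin P > 0\<close> unfolding P_def by simp
  finally have even_terms: "(\<Sum>j=1..h. f (2*j)) = real m2 * (real h)\<^sup>2 / (sin P)\<^sup>2" .
  have "(\<Sum>k=1..g. f k) = (real h)\<^sup>2 * (real m1 / (cos P)\<^sup>2 + real m2 / (sin P)\<^sup>2)"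
    unfolding g sum_atLeast1_split_odd_even odd_terms even_terms by (simp add: algebra_simps)
  also have "\<dots> = (real h)\<^sup>2 * (2 * (real m1 + real m2) / (sin (2*P))\<^sup>2
      * (1 + (real m2 - real m1) / (real m2 + real m1) * cos (2*P)))"
    using weighted_inv_cos_sq_add_inv_sin_sq[of P "real m1" "real m2"] \<open>sin (2*P) > 0\<close> assms(3)
    by simp
  also have "\<dots> = (real m1 + real m2) * real g / 2 * real g / (sin (real g * t))\<^sup>2
        * (1 + iso_delta g m1 m2 * cos (real g * t))"
    using h unfolding g P_def iso_delta_def by (auto simp: power2_eq_square)
  finally show ?thesis unfolding f_def .
qed

lemma iso_weighted_inv_sin_sq_sum:
  fixes t :: real
  assumes "g \<in> {1, 2, 3, 4, 6}" and "1 \<le> m1" and "odd g \<longrightarrow> m1 = m2"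
    and "0 < t" and "t < pi / real g"
  shows "(\<Sum>k=1..g. real (iso_mult m1 m2 k) / (sin (real k * pi / real g - t))\<^sup>2)
    = (real m1 + real m2) * real g / 2 * real g / (sin (real g * t))\<^sup>2
        * (1 + iso_delta g m1 m2 * cos (real g * t))"
proof (cases "even g")
  case True
  with assms(1) obtain h where "g = 2*h" and "h \<in> {1, 2, 3}" by auto
  from iso_weighted_inv_sin_sq_sum_even[OF this assms(2,4,5)] show ?thesis .
next
  case False
  with assms(1,3) have "g \<in> {1, 3}" and "m2 = m1" by auto
  have "sin (real g * t) > 0" using assms(4,5) \<open>g \<in> {1, 3}\<close> by (auto intro: sin_gt_zero simp: field_simps)
  have "(\<Sum>k=1..g. real (iso_mult m1 m2 k) / (sin (real k * pi / real g - t))\<^sup>2)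
      = real m1 * (\<Sum>k=1..g. 1 / (sin (real k * pi / real g - t))\<^sup>2)"
    unfolding sum_distrib_left using \<open>m2 = m1\<close> by (simp add: iso_mult_def)
  also have "\<dots> = real m1 * (real g)\<^sup>2 / (sin (real g * t))\<^sup>2"
  proof -
    have "g \<in> {1, 2, 3}" using \<open>g \<in> {1, 3}\<close> by auto
    from inv_sin_sq_sum_equispaced[OF this] \<open>sin (real g * t) > 0\<close> show ?thesis by simp
  qed
  finally show ?thesis using \<open>m2 = m1\<close> by (simp add: iso_delta_def power2_eq_square)
qed

lemma inner_orthonormal_sq_sum:
  fixes e1 e2 a :: complex
  assumes "norm e1 = 1" and "norm e2 = 1" and "e1 \<bullet> e2 = 0"
  shows "(e1 \<bullet> a)\<^sup>2 + (e2 \<bullet> a)\<^sup>2 = (norm a)\<^sup>2"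
proof -
  have "(Re e1)\<^sup>2 + (Im e1)\<^sup>2 = 1" "(Re e2)\<^sup>2 + (Im e2)\<^sup>2 = 1"
    using assms(1,2) by (simp_all add: cmod_def)
  moreover have "Re e1 * Re e2 + Im e1 * Im e2 = 0"
    using assms(3) by (simp add: inner_complex_def)
  ultimately show ?thesis
    by (simp add: inner_complex_def cmod_def) algebra
qed

lemma norm_iso_alpha [simp]: "norm (iso_alpha g k) = 1"
  by (simp add: iso_alpha_def)

lemma inner_cis_iso_alpha:
  "(complex_of_real r * cis t) \<bullet> iso_alpha g k = r * sin (real k * pi / real g - t)"
  unfolding iso_alpha_def by (simp add: inner_complex_def cos_diff sin_diff algebra_simps)

lemma inner_cis_iso_alpha_pos:
  assumes "r > 0" and "0 < t" and "t < pi / real g" and "k \<in> {1..g}"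
  shows "(complex_of_real r * cis t) \<bullet> iso_alpha g k > 0"
proof -
  have "pi / real g \<le> real k * pi / real g" "real k * pi / real g \<le> pi"
    using assms(4) by (auto simp: field_simps)
  then have "sin (real k * pi / real g - t) > 0"
    using assms(2,3) by (intro sin_gt_zero) auto
  then show ?thesis unfolding inner_cis_iso_alpha using assms(1) by simp
qed

lemma iso_HS_sq_eq:
  "iso_HS_sq g m1 m2 x \<xi> =
     (\<Sum>k=1..g. real (iso_mult m1 m2 k) * (\<xi> \<bullet> iso_alpha g k)\<^sup>2 / (x \<bullet> iso_alpha g k)\<^sup>2)"
proof -
  have "iso_shape_ev g x k \<xi> = - (\<xi> \<bullet> iso_alpha g k) / (x \<bullet> iso_alpha g k)" for k
  proof -
    have "- iso_alpha g k / complex_of_real (x \<bullet> iso_alpha g k) = (- 1 / (x \<bullet> iso_alpha g k)) *\<^sub>R iso_alpha g k"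
      by (simp add: scaleR_conv_of_real divide_inverse)
    then show ?thesis unfolding iso_shape_ev_def by simp
  qed
  then show ?thesis unfolding iso_HS_sq_def by (simp add: power_divide)
qed

lemma iso_normE_sq_eq:
  assumes "norm e1 = 1" and "norm e2 = 1" and "e1 \<bullet> e2 = 0"
  shows "iso_normE_sq g m1 m2 x e1 e2 = (\<Sum>k=1..g. real (iso_mult m1 m2 k) / (x \<bullet> iso_alpha g k)\<^sup>2)"
  unfolding iso_normE_sq_def iso_HS_sq_eq sum.distrib[symmetric] add_divide_distrib[symmetric]
    distrib_left[symmetric] inner_orthonormal_sq_sum[OF assms] by simp

lemma iso_normS_sq_eq:
  assumes "norm \<nu> = 1" and "\<nu> \<bullet> x = 0" and "x \<noteq> 0"
    and "\<And>k. k \<in> {1..g} \<Longrightarrow> x \<bullet> iso_alpha g k \<noteq> 0"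
  shows "iso_normS_sq g m1 m2 x \<nu> = (\<Sum>k=1..g. real (iso_mult m1 m2 k) / (x \<bullet> iso_alpha g k)\<^sup>2)
           - (\<Sum>k=1..g. real (iso_mult m1 m2 k)) / (norm x)\<^sup>2"
proof -
  define y where "y = (1 / norm x) *\<^sub>R x"
  have "norm y = 1" "y \<bullet> \<nu> = 0" using assms(2,3) unfolding y_def by (simp_all add: inner_commute)
  have normal_part: "(\<nu> \<bullet> iso_alpha g k)\<^sup>2 = 1 - (x \<bullet> iso_alpha g k)\<^sup>2 / (norm x)\<^sup>2" for k
    using inner_orthonormal_sq_sum[OF \<open>norm y = 1\<close> assms(1) \<open>y \<bullet> \<nu> = 0\<close>, of "iso_alpha g k"]
    unfolding y_def by (simp add: power_divide)
  then have "iso_normS_sq g m1 m2 x \<nu> = (\<Sum>k=1..g. real (iso_mult m1 m2 k) / (x \<bullet> iso_alpha g k)\<^sup>2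
      - real (iso_mult m1 m2 k) / (norm x)\<^sup>2)"
    unfolding iso_normS_sq_def iso_HS_sq_eq normal_part using assms(4)
    by (intro sum.cong) (simp_all add: field_simps)
  then show ?thesis by (simp add: sum_subtractf sum_divide_distrib)
qed

theorem lemma4p7:
  fixes g m1 m2 n :: nat and r \<theta> :: real and x e1 e2 \<nu> :: complex
  assumes "g \<in> {1, 2, 3, 4, 6}"
    and "1 \<le> m1" and "m1 \<le> m2" and "odd g \<longrightarrow> m1 = m2"
    and "(m1 + m2) * g = 2 * n"
    and "r > 0" and "0 < \<theta>" and "\<theta> < pi / real g"
    and "x = complex_of_real r * cis \<theta>"
    and "norm e1 = 1" and "norm e2 = 1" and "e1 \<bullet> e2 = 0"
    and "norm \<nu> = 1" and "\<nu> \<bullet> x = 0"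
  shows "iso_normE_sq g m1 m2 x e1 e2 =
           real n * real g / r\<^sup>2 * (1 / (sin (real g * \<theta>))\<^sup>2)
             * (1 + iso_delta g m1 m2 * cos (real g * \<theta>))
     \<and> iso_normS_sq g m1 m2 x \<nu> =
           real n * real g / r\<^sup>2 * (1 / (sin (real g * \<theta>))\<^sup>2)
             * (1 + iso_delta g m1 m2 * cos (real g * \<theta>)) - real n / r\<^sup>2"
proof -
  have n: "real n = (real m1 + real m2) * real g / 2"
    using arg_cong[OF assms(5), of real] by simp
  have nonzero: "x \<bullet> iso_alpha g k \<noteq> 0" if "k \<in> {1..g}" for k
    using inner_cis_iso_alpha_pos[OF assms(6-8) that] unfolding assms(9) by simp
  have "norm x = r" "x \<noteq> 0" using assms(6) unfolding assms(9) by (simp_all add: norm_mult)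
  have "(\<Sum>k=1..g. real (iso_mult m1 m2 k) / (x \<bullet> iso_alpha g k)\<^sup>2)
      = (\<Sum>k=1..g. real (iso_mult m1 m2 k) / (sin (real k * pi / real g - \<theta>))\<^sup>2) / r\<^sup>2"
    unfolding assms(9) inner_cis_iso_alpha power_mult_distrib sum_divide_distrib
    by (simp add: mult.commute)
  also have "\<dots> = real n * real g / r\<^sup>2 * (1 / (sin (real g * \<theta>))\<^sup>2)
      * (1 + iso_delta g m1 m2 * cos (real g * \<theta>))"
    unfolding iso_weighted_inv_sin_sq_sum[OF assms(1,2,4,7,8)] n by simp
  finally have weighted_sum: "(\<Sum>k=1..g. real (iso_mult m1 m2 k) / (x \<bullet> iso_alpha g k)\<^sup>2)
      = real n * real g / r\<^sup>2 * (1 / (sin (real g * \<theta>))\<^sup>2)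
        * (1 + iso_delta g m1 m2 * cos (real g * \<theta>))" .
  have "(\<Sum>k=1..g. real (iso_mult m1 m2 k)) = real n" using sum_iso_mult[OF assms(4)] n by simp
  then show ?thesis
    using iso_normE_sq_eq[OF assms(10-12), of g m1 m2 x]
      iso_normS_sq_eq[OF assms(13,14) \<open>x \<noteq> 0\<close> nonzero, of m1 m2]
    unfolding weighted_sum \<open>norm x = r\<close> by simp
qed

end
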